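(* Let $(\mathcal Q,d)$ be a Hadamard space, let $\gamma:I_\gamma\to\mathcal Q$ be a unit-speed geodesic and let $y\in\mathcal Q$. Then the function $I_\gamma\to\mathbb R$, $t\mapsto d(y,\gamma(t))$, is $\mathcal G$-convex.
   Context: A Hadamard space is a complete metric space $(\mathcal Q,d)$ such that for all $y_0,y_1$ there is $m$ with $\frac12 d(y_0,q)^2+\frac12 d(y_1,q)^2-\frac14 d(y_0,y_1)^2\ge d(q,m)^2$ for all $q$. A unit-speed geodesic is a map $\gamma:I_\gamma\to\mathcal Q$ on an interval $I_\gamma\subset\mathbb R$ with $d(\gamma(s),\gamma(t))=|s-t|$. $\mathcal G:=\{t\mapsto\sqrt{(t-t_0)^2+h^2}:\ t_0\in\mathbb R,\ h\ge0\}$; a function $f:I\to\mathbb R$ on an interval $I$ is $\mathcal G$-convex if for every $t_0\in I$ there is $g\in\mathcal G$ with $g(t_0)=f(t_0)$ and $g(s)\le f(s)$ for all $s\in I$. *)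

theory Defs
  imports "HOL-Analysis.Analysis"
begin

definition hadamard_space :: "'a::{metric_space,complete_space} itself \<Rightarrow> bool" where
  "hadamard_space _ \<longleftrightarrow>
     (\<forall>y0 y1 :: 'a. \<exists>m :: 'a. \<forall>q :: 'a.
        (1/2) * (dist y0 q)^2 + (1/2) * (dist y1 q)^2 - (1/4) * (dist y0 y1)^2 \<ge> (dist q m)^2)"

definition unit_speed_geodesic :: "real set \<Rightarrow> (real \<Rightarrow> 'a::metric_space) \<Rightarrow> bool" where
  "unit_speed_geodesic I \<gamma> \<longleftrightarrow> is_interval I \<and>
     (\<forall>s\<in>I. \<forall>t\<in>I. dist (\<gamma> s) (\<gamma> t) = \<bar>s - t\<bar>)"

definition G_family :: "(real \<Rightarrow> real) set" where
  "G_family = {g. \<exists>t0 h :: real. h \<ge> 0 \<and> g = (\<lambda>t. sqrt ((t - t0)^2 + h^2))}"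

definition G_convex :: "real set \<Rightarrow> (real \<Rightarrow> real) \<Rightarrow> bool" where
  "G_convex I f \<longleftrightarrow> is_interval I \<and>
     (\<forall>t0\<in>I. \<exists>g\<in>G_family. g t0 = f t0 \<and> (\<forall>s\<in>I. g s \<le> f s))"

end

theory Submission
  imports Defs
begin

text \<open>Fix \<open>t0 \<in> I\<close> and put \<open>r = d(y, \<gamma> t0)\<close>. Applied to \<open>\<gamma> a\<close> and \<open>\<gamma> b\<close>, the Hadamard
  inequality forces its point \<open>m\<close> to be the geodesic midpoint \<open>\<gamma> ((a + b) / 2)\<close>, so
  \<open>\<phi> t = d(y, \<gamma> t)\<^sup>2 - (t - t0)\<^sup>2\<close> is midpoint convex, hence convex by continuity. As \<open>t \<mapsto> d(y, \<gamma> t)\<close>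
  is 1-Lipschitz, \<open>\<phi> s \<ge> r\<^sup>2 - 2 r \<bar>s - t0\<bar> - (s - t0)\<^sup>2\<close>, which confines the one-sided slopes of \<open>\<phi>\<close>
  at \<open>t0\<close> to \<open>[-2r, 2r]\<close> even when \<open>t0\<close> is an endpoint of \<open>I\<close>. A supporting line of slope \<open>B\<close>
  with \<open>\<bar>B\<bar> \<le> 2r\<close> gives \<open>d(y, \<gamma> s)\<^sup>2 \<ge> (s - t0 + B/2)\<^sup>2 + r\<^sup>2 - B\<^sup>2/4\<close>, and the square root of the
  right-hand side is the member of \<open>G_family\<close> with centre \<open>t0 - B/2\<close> and height
  \<open>sqrt (r\<^sup>2 - B\<^sup>2/4)\<close>; it touches at \<open>t0\<close>.\<close>

lemma midpoint_convex_nonpos: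
  fixes k :: "real \<Rightarrow> real"
  assumes cont: "continuous_on {a..b} k" and "k a \<le> 0" "k b \<le> 0"
    and mid: "\<And>x y. x \<in> {a..b} \<Longrightarrow> y \<in> {a..b} \<Longrightarrow> k ((x + y) / 2) \<le> (k x + k y) / 2"
    and t: "t \<in> {a..b}"
  shows "k t \<le> 0"
proof (rule ccontr)
  assume "\<not> k t \<le> 0"
  obtain c0 where c0: "c0 \<in> {a..b}" and M_max: "\<And>s. s \<in> {a..b} \<Longrightarrow> k s \<le> k c0"
    using continuous_attains_sup[OF compact_Icc _ cont] t by auto
  define M where "M = k c0"
  have "M > 0"
    using M_max[OF t] M_def \<open>\<not> k t \<le> 0\<close> by linarith
  define S where "S = {s \<in> {a..b}. k s = M}"
  have "closed S"
    unfolding S_def by (rule continuous_closed_preimage_constant[OF cont closed_atLeastAtMost])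
  moreover have "S \<noteq> {}" and "bdd_below S"
    using c0 unfolding S_def M_def by (auto intro: bdd_belowI[of _ a])
  ultimately have "Inf S \<in> S"
    by (intro closed_contains_Inf)
  define c where "c = Inf S"
  have c: "c \<in> {a..b}" "k c = M" and c_least: "\<And>s. s \<in> S \<Longrightarrow> c \<le> s"
    using \<open>Inf S \<in> S\<close> cInf_lower[OF _ \<open>bdd_below S\<close>] unfolding c_def S_def by auto
  \<comment> \<open>the leftmost maximiser sits strictly inside, with a strictly smaller value to its left\<close>
  define d where "d = min (c - a) (b - c)"
  have "d > 0"
    using c \<open>M > 0\<close> \<open>k a \<le> 0\<close> \<open>k b \<le> 0\<close> unfolding d_def by (cases "c = a \<or> c = b") auto
  then have left: "c - d \<in> {a..b}" and right: "c + d \<in> {a..b}"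
    using c(1) unfolding d_def by auto
  have "c - d \<notin> S"
    using c_least \<open>d > 0\<close> by force
  then have "k (c - d) < M"
    using M_max[OF left] left unfolding S_def M_def by force
  moreover have "k c \<le> (k (c - d) + k (c + d)) / 2"
    using mid[OF left right] by simp
  ultimately show False
    using M_max[OF right] c(2) unfolding M_def by argo
qed

lemma convex_on_if_midpoint_convex:
  fixes \<phi> :: "real \<Rightarrow> real"
  assumes "convex I" and cont: "continuous_on I \<phi>"
    and mid: "\<And>x y. x \<in> I \<Longrightarrow> y \<in> I \<Longrightarrow> \<phi> ((x + y) / 2) \<le> (\<phi> x + \<phi> y) / 2"
  shows "convex_on I \<phi>"
proof (rule convex_on_linorderI[OF _ \<open>convex I\<close>])
  fix t x y :: real
  assume t: "0 < t" "t < 1" and xy: "x \<in> I" "y \<in> I" "x < y"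
  have sub: "{x..y} \<subseteq> I"
    using closed_segment_subset[OF xy(1,2) \<open>convex I\<close>] xy(3) by (simp add: closed_segment_eq_real_ivl)
  define m where "m = (\<phi> y - \<phi> x) / (y - x)"
  define chord where "chord s = \<phi> x + (s - x) * m" for s
  define k where "k s = \<phi> s - chord s" for s
  have "k ((1 - t) * x + t * y) \<le> 0"
  proof (rule midpoint_convex_nonpos[of x y k])
    show "continuous_on {x..y} k"
      unfolding k_def chord_def by (intro continuous_intros continuous_on_subset[OF cont sub])
    show "k x \<le> 0" "k y \<le> 0"
      using xy(3) by (simp_all add: k_def chord_def m_def)
    show "k ((u + v) / 2) \<le> (k u + k v) / 2" if "u \<in> {x..y}" "v \<in> {x..y}" for u v
    proof -
      have "\<phi> ((u + v) / 2) \<le> (\<phi> u + \<phi> v) / 2"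
        using mid[of u v] that sub by (simp add: subset_iff)
      moreover have "chord ((u + v) / 2) = (chord u + chord v) / 2"
        unfolding chord_def by (simp add: algebra_simps)
      ultimately show ?thesis
        unfolding k_def by argo
    qed
    have "0 \<le> t * (y - x)" "t * (y - x) \<le> y - x"
      using t xy(3) by simp_all
    then show "(1 - t) * x + t * y \<in> {x..y}"
      by (simp add: algebra_simps)
  qed
  moreover have "chord ((1 - t) * x + t * y) = (1 - t) * \<phi> x + t * \<phi> y"
  proof -
    have "((1 - t) * x + t * y - x) * m = t * (\<phi> y - \<phi> x)"
      unfolding m_def using xy(3) by (simp add: field_simps)
    then show ?thesis
      unfolding chord_def by (simp add: algebra_simps)
  qed
  ultimately show "\<phi> ((1 - t) *\<^sub>R x + t *\<^sub>R y) \<le> (1 - t) * \<phi> x + t * \<phi> y"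
    unfolding k_def by simp
qed

lemma divide_diff_swap:
  fixes a b c d :: real
  shows "(a - b) / (c - d) = (b - a) / (d - c)"
  by (metis minus_diff_eq minus_divide_divide)

lemma convex_on_reflect:
  fixes \<phi> :: "real \<Rightarrow> real"
  assumes "convex_on I \<phi>"
  shows "convex_on (uminus ` I) (\<lambda>x. \<phi> (- x))"
proof (rule convex_onI)
  show "convex (uminus ` I)"
    using convex_on_imp_convex[OF assms] by (simp add: convex_negations)
  fix t x y :: real
  assume "0 < t" "t < 1" "x \<in> uminus ` I" "y \<in> uminus ` I"
  then show "\<phi> (- ((1 - t) *\<^sub>R x + t *\<^sub>R y)) \<le> (1 - t) * \<phi> (- x) + t * \<phi> (- y)"
    using convex_onD[OF assms, of t "- x" "- y"] by auto
qed

lemma convex_on_right_slope_ge: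
  fixes \<phi> :: "real \<Rightarrow> real"
  assumes cvx: "convex_on I \<phi>" and "t0 \<in> I" "s \<in> I" "t0 < s"
    and lower: "\<And>v. v \<in> I \<Longrightarrow> t0 < v \<Longrightarrow> \<phi> t0 - c * (v - t0) - K * (v - t0)\<^sup>2 \<le> \<phi> v"
  shows "- c \<le> (\<phi> s - \<phi> t0) / (s - t0)"
proof (rule ccontr)
  assume contra: "\<not> ?thesis"
  define e where "e = - c - (\<phi> s - \<phi> t0) / (s - t0)"
  have "e > 0"
    using contra unfolding e_def by linarith
  \<comment> \<open>close enough to t0 the quadratic error term is below e, while slopes only decrease towards t0\<close>
  define v where "v = t0 + min (s - t0) (e / (2 * (\<bar>K\<bar> + 1)))"
  have v: "t0 < v" "v \<le> s"
    using \<open>e > 0\<close> \<open>t0 < s\<close> unfolding v_def by (auto simp: add_pos_pos)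
  have "v \<in> I"
    using convex_on_imp_convex[OF cvx] \<open>t0 \<in> I\<close> \<open>s \<in> I\<close> v
    by (metis is_interval_convex_1 mem_is_interval_1_I less_imp_le)
  have "(\<phi> v - \<phi> t0) / (v - t0) \<le> (\<phi> s - \<phi> t0) / (s - t0)"
  proof (cases "v = s")
    case False
    then show ?thesis
      using convex_on_slope_le(1)[OF cvx \<open>t0 \<in> I\<close> \<open>s \<in> I\<close>, of v] v
      by (simp only: divide_diff_swap[of "\<phi> t0"])
  qed simp
  moreover have "- c - K * (v - t0) \<le> (\<phi> v - \<phi> t0) / (v - t0)"
  proof -
    have "(- c - K * (v - t0)) * (v - t0) \<le> \<phi> v - \<phi> t0"
      using lower[OF \<open>v \<in> I\<close> \<open>t0 < v\<close>] by (simp add: power2_eq_square algebra_simps)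
    then show ?thesis
      using \<open>t0 < v\<close> by (simp add: pos_le_divide_eq)
  qed
  moreover have "K * (v - t0) < e"
  proof -
    have "K * (v - t0) \<le> \<bar>K\<bar> * (e / (2 * (\<bar>K\<bar> + 1)))"
      using v unfolding v_def by (intro mult_mono) auto
    also have "\<dots> < e"
      using \<open>e > 0\<close> by (simp add: field_simps add_nonneg_pos)
    finally show ?thesis .
  qed
  ultimately show False
    unfolding e_def by linarith
qed

lemma convex_on_left_slope_le:
  fixes \<phi> :: "real \<Rightarrow> real"
  assumes cvx: "convex_on I \<phi>" and "t0 \<in> I" "s \<in> I" "s < t0"
    and lower: "\<And>v. v \<in> I \<Longrightarrow> v < t0 \<Longrightarrow> \<phi> t0 - c * (t0 - v) - K * (v - t0)\<^sup>2 \<le> \<phi> v"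
  shows "(\<phi> s - \<phi> t0) / (s - t0) \<le> c"
proof -
  have "- c \<le> (\<phi> (- (- s)) - \<phi> (- (- t0))) / (- s - - t0)"
  proof (rule convex_on_right_slope_ge[OF convex_on_reflect[OF cvx], of "- t0" "- s" c K])
    fix v assume "v \<in> uminus ` I" "- t0 < v"
    then show "\<phi> (- (- t0)) - c * (v - - t0) - K * (v - - t0)\<^sup>2 \<le> \<phi> (- v)"
      using lower[of "- v"] by (auto simp: power2_commute algebra_simps)
  qed (use assms in auto)
  moreover have "(\<phi> s - \<phi> t0) / (t0 - s) = - ((\<phi> s - \<phi> t0) / (s - t0))"
    by (metis minus_diff_eq minus_divide_right)
  ultimately show ?thesis
    by simp
qed

lemma convex_on_bounded_supporting_line:
  fixes \<phi> :: "real \<Rightarrow> real"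
  assumes cvx: "convex_on I \<phi>" and t0: "t0 \<in> I" and "0 \<le> c"
    and lower: "\<And>s. s \<in> I \<Longrightarrow> \<phi> t0 - c * \<bar>s - t0\<bar> - K * (s - t0)\<^sup>2 \<le> \<phi> s"
  shows "\<exists>B. \<bar>B\<bar> \<le> c \<and> (\<forall>s\<in>I. \<phi> t0 + B * (s - t0) \<le> \<phi> s)"
proof -
  define slope where "slope s = (\<phi> s - \<phi> t0) / (s - t0)" for s
  have right: "- c \<le> slope s" if "s \<in> I" "t0 < s" for s
    unfolding slope_def using lower by (intro convex_on_right_slope_ge[OF cvx t0 that, of c K]) force
  have left: "slope s \<le> c" if "s \<in> I" "s < t0" for s
    unfolding slope_def using lower by (intro convex_on_left_slope_le[OF cvx t0 that, of c K]) force
  have mono: "slope u \<le> slope v" if "u \<in> I" "v \<in> I" "u < t0" "t0 < v" for u v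
    using convex_on_slope_le[OF cvx \<open>u \<in> I\<close> \<open>v \<in> I\<close> \<open>u < t0\<close> \<open>t0 < v\<close>]
    unfolding slope_def divide_diff_swap[of "\<phi> t0"] by linarith
  define L where "L = insert (- c) (slope ` {s \<in> I. s < t0})"
  have L_le_c: "x \<le> c" if "x \<in> L" for x
    using that \<open>0 \<le> c\<close> left unfolding L_def by auto
  then have "bdd_above L"
    by (rule bdd_aboveI)
  define B where "B = Sup L"
  have B_ge: "x \<le> B" if "x \<in> L" for x
    unfolding B_def by (rule cSup_upper[OF that \<open>bdd_above L\<close>])
  have B_le_right: "B \<le> slope v" if "v \<in> I" "t0 < v" for v
    unfolding B_def L_def using that right mono by (intro cSup_least) auto
  have "\<bar>B\<bar> \<le> c"
    using B_ge[of "- c"] L_le_c cSup_least[of L c] unfolding L_def B_def by auto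
  moreover have "\<phi> t0 + B * (s - t0) \<le> \<phi> s" if "s \<in> I" for s
  proof (cases s t0 rule: linorder_cases)
    case less
    then have "slope s \<le> B"
      using B_ge that unfolding L_def by auto
    with less show ?thesis
      unfolding slope_def by (simp add: neg_divide_le_eq algebra_simps)
  next
    case greater
    then have "B \<le> slope s"
      using B_le_right that by auto
    with greater show ?thesis
      unfolding slope_def by (simp add: pos_le_divide_eq algebra_simps)
  qed simp
  ultimately show ?thesis
    by blast
qed

lemma unit_speed_geodesic_continuous:
  assumes "unit_speed_geodesic I \<gamma>"
  shows "continuous_on I \<gamma>"
proof (rule lipschitz_on_continuous_on)
  show "1-lipschitz_on I \<gamma>"
    using assms unfolding unit_speed_geodesic_def by (intro lipschitz_onI) (auto simp: dist_real_def)
qed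

lemma hadamard_geodesic_midpoint:
  fixes \<gamma> :: "real \<Rightarrow> 'a::{metric_space,complete_space}"
  assumes "hadamard_space TYPE('a)" and geo: "unit_speed_geodesic I \<gamma>"
    and ab: "a \<in> I" "b \<in> I"
  shows "(dist y (\<gamma> ((a + b) / 2)))\<^sup>2 \<le> (dist y (\<gamma> a))\<^sup>2 / 2 + (dist y (\<gamma> b))\<^sup>2 / 2 - (a - b)\<^sup>2 / 4"
proof -
  have dist_geo: "dist (\<gamma> s) (\<gamma> t) = \<bar>s - t\<bar>" if "s \<in> I" "t \<in> I" for s t
    using geo that unfolding unit_speed_geodesic_def by blast
  define c where "c = (a + b) / 2"
  have "convex I"
    using geo is_interval_convex_1 unfolding unit_speed_geodesic_def by blast
  then have "c \<in> I"
    using convexD[OF _ ab, of "1/2" "1/2"] unfolding c_def by (simp add: add_divide_distrib)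
  obtain m where m: "\<And>q. (dist q m)\<^sup>2 \<le> (1/2) * (dist (\<gamma> a) q)\<^sup>2 + (1/2) * (dist (\<gamma> b) q)\<^sup>2
      - (1/4) * (dist (\<gamma> a) (\<gamma> b))\<^sup>2"
    using assms(1) unfolding hadamard_space_def by blast
  \<comment> \<open>the point m of the Hadamard inequality is forced to be the geodesic midpoint\<close>
  have "(dist (\<gamma> c) m)\<^sup>2 \<le> (1/2) * (a - c)\<^sup>2 + (1/2) * (b - c)\<^sup>2 - (1/4) * (a - b)\<^sup>2"
    using m[of "\<gamma> c"] dist_geo[OF ab(1) \<open>c \<in> I\<close>] dist_geo[OF ab(2) \<open>c \<in> I\<close>] dist_geo[OF ab]
    by (simp add: power2_abs)
  also have "\<dots> = 0"
    unfolding c_def by (simp add: power2_eq_square algebra_simps)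
  finally have "m = \<gamma> c"
    by simp
  then show ?thesis
    using m[of y] dist_geo[OF ab] unfolding c_def by (simp add: dist_commute power2_abs)
qed

lemma hadamard_dist_geodesic_sq_convex:
  fixes \<gamma> :: "real \<Rightarrow> 'a::{metric_space,complete_space}"
  assumes "hadamard_space TYPE('a)" and geo: "unit_speed_geodesic I \<gamma>"
  shows "convex_on I (\<lambda>t. (dist y (\<gamma> t))\<^sup>2 - (t - t0)\<^sup>2)"
proof (rule convex_on_if_midpoint_convex)
  show "convex I"
    using geo is_interval_convex_1 unfolding unit_speed_geodesic_def by blast
  show "continuous_on I (\<lambda>t. (dist y (\<gamma> t))\<^sup>2 - (t - t0)\<^sup>2)"
    by (intro continuous_intros unit_speed_geodesic_continuous[OF geo])
  fix a b assume "a \<in> I" "b \<in> I"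
  then have "(dist y (\<gamma> ((a + b) / 2)))\<^sup>2 \<le> (dist y (\<gamma> a))\<^sup>2 / 2 + (dist y (\<gamma> b))\<^sup>2 / 2 - (a - b)\<^sup>2 / 4"
    by (rule hadamard_geodesic_midpoint[OF assms])
  moreover have "((a + b) / 2 - t0)\<^sup>2 = (a - t0)\<^sup>2 / 2 + (b - t0)\<^sup>2 / 2 - (a - b)\<^sup>2 / 4"
    by (simp add: power2_eq_square field_simps)
  ultimately show "(dist y (\<gamma> ((a + b) / 2)))\<^sup>2 - ((a + b) / 2 - t0)\<^sup>2
      \<le> ((dist y (\<gamma> a))\<^sup>2 - (a - t0)\<^sup>2 + ((dist y (\<gamma> b))\<^sup>2 - (b - t0)\<^sup>2)) / 2"
    by argo
qed

lemma sqrt_quadratic_in_G_family: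
  fixes r B t0 :: real
  assumes "\<bar>B\<bar> \<le> 2 * r"
  shows "(\<lambda>s. sqrt (r\<^sup>2 + B * (s - t0) + (s - t0)\<^sup>2)) \<in> G_family"
proof -
  define h where "h = sqrt (r\<^sup>2 - (B / 2)\<^sup>2)"
  have "(B / 2)\<^sup>2 \<le> r\<^sup>2"
    using assms abs_le_square_iff[of "B / 2" r] by auto
  then have "h \<ge> 0" and "r\<^sup>2 + B * (s - t0) + (s - t0)\<^sup>2 = (s - (t0 - B / 2))\<^sup>2 + h\<^sup>2" for s
    unfolding h_def by (simp_all add: power2_eq_square algebra_simps)
  then show ?thesis
    unfolding G_family_def mem_Collect_eq
    by (intro exI[where x = "t0 - B / 2"] exI[where x = h]) simp
qed

lemma power2_ge_of_ge_diff:
  fixes a b d :: real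
  assumes "0 \<le> b" "b - d \<le> a"
  shows "b\<^sup>2 - 2 * b * d \<le> a\<^sup>2"
proof (cases "d < b")
  case True
  have "b\<^sup>2 - 2 * b * d \<le> (b - d)\<^sup>2"
    by (simp add: power2_eq_square algebra_simps)
  also have "\<dots> \<le> a\<^sup>2"
    using assms True by (intro power_mono) auto
  finally show ?thesis .
next
  case False
  have "b\<^sup>2 - 2 * b * d = b * (b - 2 * d)"
    by (simp add: power2_eq_square algebra_simps)
  also have "\<dots> \<le> 0"
    using assms False by (intro mult_nonneg_nonpos) auto
  finally show ?thesis
    using zero_le_power2[of a] by linarith
qed

lemma hadamard_dist_geodesic_sq_quadratic_minorant:
  fixes \<gamma> :: "real \<Rightarrow> 'a::{metric_space,complete_space}"
  assumes "hadamard_space TYPE('a)" and geo: "unit_speed_geodesic I \<gamma>" and t0: "t0 \<in> I"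
  shows "\<exists>B. \<bar>B\<bar> \<le> 2 * dist y (\<gamma> t0) \<and>
    (\<forall>s\<in>I. (dist y (\<gamma> t0))\<^sup>2 + B * (s - t0) + (s - t0)\<^sup>2 \<le> (dist y (\<gamma> s))\<^sup>2)"
proof -
  define r where "r = dist y (\<gamma> t0)"
  have "r\<^sup>2 - 2 * r * \<bar>s - t0\<bar> - (s - t0)\<^sup>2 \<le> (dist y (\<gamma> s))\<^sup>2 - (s - t0)\<^sup>2" if "s \<in> I" for s
  proof -
    have "r \<le> dist y (\<gamma> s) + \<bar>s - t0\<bar>"
      using dist_triangle[of y "\<gamma> t0" "\<gamma> s"] geo t0 that
      unfolding r_def unit_speed_geodesic_def by (simp add: dist_commute)
    then show ?thesis
      using power2_ge_of_ge_diff[of r "\<bar>s - t0\<bar>" "dist y (\<gamma> s)"] r_def by simp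
  qed
  then have "\<exists>B. \<bar>B\<bar> \<le> 2 * r \<and> (\<forall>s\<in>I. r\<^sup>2 + B * (s - t0) \<le> (dist y (\<gamma> s))\<^sup>2 - (s - t0)\<^sup>2)"
    using convex_on_bounded_supporting_line[OF hadamard_dist_geodesic_sq_convex[OF assms(1,2), of y t0] t0,
        where c = "2 * r" and K = 1]
    unfolding r_def by auto
  then show ?thesis
    unfolding r_def by (auto simp: algebra_simps)
qed

theorem mainTheorem15:
  fixes \<gamma> :: "real \<Rightarrow> 'a::{metric_space,complete_space}"
    and I :: "real set" and y :: 'a
  assumes "hadamard_space TYPE('a)"
    and "unit_speed_geodesic I \<gamma>"
  shows "G_convex I (\<lambda>t. dist y (\<gamma> t))"
proof -
  have "\<exists>g\<in>G_family. g t0 = dist y (\<gamma> t0) \<and> (\<forall>s\<in>I. g s \<le> dist y (\<gamma> s))" if t0: "t0 \<in> I" for t0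
  proof -
    define r where "r = dist y (\<gamma> t0)"
    obtain B where "\<bar>B\<bar> \<le> 2 * r" and B: "\<And>s. s \<in> I \<Longrightarrow> r\<^sup>2 + B * (s - t0) + (s - t0)\<^sup>2 \<le> (dist y (\<gamma> s))\<^sup>2"
      using hadamard_dist_geodesic_sq_quadratic_minorant[OF assms t0] unfolding r_def by blast
    define g where "g s = sqrt (r\<^sup>2 + B * (s - t0) + (s - t0)\<^sup>2)" for s
    have "g \<in> G_family"
      unfolding g_def by (rule sqrt_quadratic_in_G_family) fact
    moreover have "g t0 = dist y (\<gamma> t0)"
      unfolding g_def r_def by simp
    moreover have "g s \<le> dist y (\<gamma> s)" if "s \<in> I" for s
      using real_sqrt_le_mono[OF B[OF that]] unfolding g_def by simp
    ultimately show ?thesis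
      by blast
  qed
  then show ?thesis
    using assms(2) unfolding G_convex_def unit_speed_geodesic_def by blast
qed

end
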